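(* Suppose $\lambda$ is a regular cardinal and $S=\langle I\times n,\mathcal{R}\rangle$ is a $\lambda$-system with $n<\omega$ and $|\mathcal{R}|<\omega$. Then $S$ has a cofinal branch.
   Context: Let $\lambda$ be an infinite regular cardinal. A relation $R$ is tree-like if $a<_R c$ and $b<_R c$ imply $a,b$ are $R$-comparable ($a=b$, $a<_Rb$ or $b<_Ra$). A $\lambda$-system $\langle I\times\kappa,\mathcal{R}\rangle$ consists of an unbounded $I\subseteq\lambda$, $0<\kappa<\lambda$, levels $S_\alpha=\{\alpha\}\times\kappa$ for $\alpha\in I$ (with $S$ denoting their union), and a set $\mathcal{R}$ of binary transitive tree-like relations on $S$ with $|\mathcal{R}|<\lambda$, such that $(\alpha_0,\beta_0)<_R(\alpha_1,\beta_1)$ implies $\alpha_0<\alpha_1$, and for all $\alpha_0<\alpha_1$ in $I$ there are $\beta_0,\beta_1<\kappa$ and $R\in\mathcal{R}$ with $(\alpha_0,\beta_0)<_R(\alpha_1,\beta_1)$. A branch through $R$ is a set of pairwise $R$-comparable elements; it is cofinal if it meets $S_\alpha$ for unboundedly many $\alpha\in I$. *)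

theory Defs
  imports Main
begin

(* The regular cardinal lambda is represented by a cardinal order r on a type 'a
   (card_order r, so Field r = UNIV); ordinals below lambda are the elements of 'a,
   with the strict order  a < b  iff  (a,b) \<in> r \<and> a \<noteq> b. *)

definition strict_below :: "'a rel \<Rightarrow> 'a \<Rightarrow> 'a \<Rightarrow> bool" where
  "strict_below r a b \<longleftrightarrow> (a, b) \<in> r \<and> a \<noteq> b"

definition unbounded_in :: "'a rel \<Rightarrow> 'a set \<Rightarrow> bool" where
  "unbounded_in r I \<longleftrightarrow> (\<forall>a. \<exists>b\<in>I. (a, b) \<in> r)"

definition sys_points :: "'a set \<Rightarrow> nat \<Rightarrow> ('a \<times> nat) set" where
  "sys_points I n = I \<times> {..<n}"

definition tree_like :: "'b rel \<Rightarrow> bool" where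
  "tree_like R \<longleftrightarrow> (\<forall>a b c. (a, c) \<in> R \<and> (b, c) \<in> R \<longrightarrow> a = b \<or> (a, b) \<in> R \<or> (b, a) \<in> R)"

(* <I \<times> n, RR> is a lambda-system (lambda given by r); elements of RR are the strict relations <_R *)
definition lambda_system :: "'a rel \<Rightarrow> 'a set \<Rightarrow> nat \<Rightarrow> ('a \<times> nat) rel set \<Rightarrow> bool" where
  "lambda_system r I n RR \<longleftrightarrow>
     unbounded_in r I \<and> 0 < n \<and> ordLess2 (card_of RR) r \<and>
     (\<forall>R\<in>RR. R \<subseteq> sys_points I n \<times> sys_points I n \<and> trans R \<and> tree_like R \<and>
        (\<forall>a0 b0 a1 b1. ((a0, b0), (a1, b1)) \<in> R \<longrightarrow> strict_below r a0 a1)) \<and>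
     (\<forall>a0\<in>I. \<forall>a1\<in>I. strict_below r a0 a1 \<longrightarrow>
        (\<exists>b0<n. \<exists>b1<n. \<exists>R\<in>RR. ((a0, b0), (a1, b1)) \<in> R))"

definition is_branch :: "'a set \<Rightarrow> nat \<Rightarrow> ('a \<times> nat) rel \<Rightarrow> ('a \<times> nat) set \<Rightarrow> bool" where
  "is_branch I n R B \<longleftrightarrow> B \<subseteq> sys_points I n \<and>
     (\<forall>x\<in>B. \<forall>y\<in>B. x = y \<or> (x, y) \<in> R \<or> (y, x) \<in> R)"

definition cofinal_branch :: "'a rel \<Rightarrow> 'a set \<Rightarrow> nat \<Rightarrow> ('a \<times> nat) rel \<Rightarrow> ('a \<times> nat) set \<Rightarrow> bool" where
  "cofinal_branch r I n R B \<longleftrightarrow> is_branch I n R B \<and>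
     (\<forall>g. \<exists>a\<in>I. (g, a) \<in> r \<and> (\<exists>b. (a, b) \<in> B))"

end

theory Submission
  imports Defs
begin

text \<open>Extend the tails \<open>I \<inter> aboveS r g\<close> of \<open>I\<close> to an ultrafilter \<open>U\<close> on the levels. Every level
of \<open>I\<close> above \<open>\<alpha>\<close> carries a point that is \<open>R\<close>-above some point of \<open>S\<^sub>\<alpha>\<close> for some \<open>R\<close>; since
these points range over the finite set \<open>n \<times> \<R> \<times> n\<close> of "links" \<open>(b, R, b')\<close>, one link already
yields a \<open>U\<close>-large set of levels \<open>\<gamma>\<close> with \<open>(\<alpha>, b) <\<^sub>R (\<gamma>, b')\<close>. By pigeonhole in \<open>U\<close>,
a single link works for a \<open>U\<close>-large, hence unbounded, set \<open>A\<close> of levels \<open>\<alpha>\<close>. Two points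
\<open>(\<alpha>, b)\<close>, \<open>(\<beta>, b)\<close> with \<open>\<alpha>, \<beta> \<in> A\<close> then have a common \<open>R\<close>-successor at any level in the
intersection of their two \<open>U\<close>-large sets, so they are \<open>R\<close>-comparable by tree-likeness, and
\<open>A \<times> {b}\<close> is a cofinal branch.\<close>

definition finite_intersection_property :: "'a set set \<Rightarrow> bool" where
  "finite_intersection_property \<D> \<longleftrightarrow> (\<forall>\<F>. finite \<F> \<longrightarrow> \<F> \<subseteq> \<D> \<longrightarrow> \<Inter>\<F> \<noteq> {})"

definition ultrafilter :: "'a set set \<Rightarrow> bool" where
  "ultrafilter U \<longleftrightarrow> {} \<notin> U \<and> (\<forall>X\<in>U. \<forall>Y\<in>U. X \<inter> Y \<in> U) \<and> (\<forall>X. X \<in> U \<or> - X \<in> U)"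

lemma ultrafilter_nonempty: "ultrafilter U \<Longrightarrow> X \<in> U \<Longrightarrow> \<exists>x. x \<in> X"
  unfolding ultrafilter_def by (metis all_not_in_conv)

lemma ultrafilter_Int: "ultrafilter U \<Longrightarrow> X \<in> U \<Longrightarrow> Y \<in> U \<Longrightarrow> X \<inter> Y \<in> U"
  unfolding ultrafilter_def by blast

lemma ultrafilter_mono:
  assumes "ultrafilter U" "X \<in> U" "X \<subseteq> Y"
  shows "Y \<in> U"
proof (rule ccontr)
  assume "Y \<notin> U"
  then have "X \<inter> - Y \<in> U" using assms(1,2) unfolding ultrafilter_def by blast
  moreover have "X \<inter> - Y = {}" using \<open>X \<subseteq> Y\<close> by blast
  ultimately show False using assms(1) unfolding ultrafilter_def by simp
qed

lemma ultrafilter_finite_UN: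
  assumes U: "ultrafilter U" and "finite T" and "(\<Union>t\<in>T. A t) \<in> U"
  shows "\<exists>t\<in>T. A t \<in> U"
  using assms(2,3)
proof (induction T rule: finite_induct)
  case empty
  then show ?case using U unfolding ultrafilter_def by simp
next
  case (insert t T)
  show ?case
  proof (rule ccontr)
    assume "\<not> (\<exists>t\<in>insert t T. A t \<in> U)"
    then have "- A t \<in> U" "- (\<Union>t\<in>T. A t) \<in> U"
      using insert.IH U unfolding ultrafilter_def by auto
    then have "(\<Union>t\<in>insert t T. A t) \<inter> (- A t \<inter> - (\<Union>t\<in>T. A t)) \<in> U"
      using insert.prems U by (simp add: ultrafilter_Int)
    moreover have "(\<Union>t\<in>insert t T. A t) \<inter> (- A t \<inter> - (\<Union>t\<in>T. A t)) = {}" by auto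
    ultimately show False using U unfolding ultrafilter_def by simp
  qed
qed

lemma ultrafilter_pigeonhole:
  assumes U: "ultrafilter U" and "X \<in> U" "finite T" "f ` X \<subseteq> T"
  shows "\<exists>t\<in>T. {x\<in>X. f x = t} \<in> U"
proof -
  have "X = (\<Union>t\<in>T. {x\<in>X. f x = t})" using \<open>f ` X \<subseteq> T\<close> by auto
  then have "(\<Union>t\<in>T. {x\<in>X. f x = t}) \<in> U" using \<open>X \<in> U\<close> by simp
  then show ?thesis using ultrafilter_finite_UN[OF U \<open>finite T\<close>] by blast
qed

lemma maximal_finite_intersection_property_imp_ultrafilter:
  assumes fip: "finite_intersection_property M"
    and max: "\<And>X. finite_intersection_property (insert X M) \<Longrightarrow> X \<in> M"
  shows "ultrafilter M"
proof -
  have Inter_M: "\<Inter>\<F> \<noteq> {}" if "finite \<F>" "\<F> \<subseteq> M" for \<F>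
    using fip that unfolding finite_intersection_property_def by blast
  have "{} \<notin> M" using Inter_M[of "{{}}"] by auto
  moreover have "X \<inter> Y \<in> M" if "X \<in> M" "Y \<in> M" for X Y
  proof (rule max, unfold finite_intersection_property_def, intro allI impI)
    fix \<F> assume "finite \<F>" "\<F> \<subseteq> insert (X \<inter> Y) M"
    then have "\<Inter>(\<F> - {X \<inter> Y} \<union> {X, Y}) \<noteq> {}" using that by (intro Inter_M) auto
    then show "\<Inter>\<F> \<noteq> {}" by auto
  qed
  moreover have "X \<in> M \<or> - X \<in> M" for X
  proof (rule ccontr)
    assume "\<not> (X \<in> M \<or> - X \<in> M)"
    then obtain \<F>\<^sub>1 \<F>\<^sub>2 where F1: "finite \<F>\<^sub>1" "\<F>\<^sub>1 \<subseteq> insert X M" "\<Inter>\<F>\<^sub>1 = {}"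
      and F2: "finite \<F>\<^sub>2" "\<F>\<^sub>2 \<subseteq> insert (- X) M" "\<Inter>\<F>\<^sub>2 = {}"
      using max unfolding finite_intersection_property_def by meson
    have "\<Inter>((\<F>\<^sub>1 - {X}) \<union> (\<F>\<^sub>2 - {- X})) \<noteq> {}"
      using F1 F2 by (intro Inter_M) auto
    then obtain x where "\<forall>Y\<in>\<F>\<^sub>1 - {X}. x \<in> Y" "\<forall>Y\<in>\<F>\<^sub>2 - {- X}. x \<in> Y" by blast
    then show False using F1(3) F2(3) by (cases "x \<in> X") auto
  qed
  ultimately show ?thesis unfolding ultrafilter_def by blast
qed

theorem ultrafilter_extending_finite_intersection_property:
  assumes "finite_intersection_property \<D>"
  shows "\<exists>U. ultrafilter U \<and> \<D> \<subseteq> U"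
proof -
  define \<A> where "\<A> = {M. \<D> \<subseteq> M \<and> finite_intersection_property M}"
  have "\<Union>\<C> \<in> \<A>" if "\<C> \<noteq> {}" "subset.chain \<A> \<C>" for \<C>
  proof -
    have "\<Inter>\<F> \<noteq> {}" if \<F>: "finite \<F>" "\<F> \<subseteq> \<Union>\<C>" for \<F>
    proof -
      obtain M where "M \<in> \<C>" "\<F> \<subseteq> M"
        using finite_subset_Union_chain[OF \<F> \<open>\<C> \<noteq> {}\<close> \<open>subset.chain \<A> \<C>\<close>] .
      then show ?thesis using \<F>(1) \<open>subset.chain \<A> \<C>\<close>
        unfolding subset.chain_def \<A>_def finite_intersection_property_def by blast
    qed
    then show ?thesis using that unfolding subset.chain_def \<A>_def finite_intersection_property_def
      by blast
  qed
  then obtain M where "M \<in> \<A>" and max: "\<forall>X\<in>\<A>. M \<subseteq> X \<longrightarrow> X = M"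
    using subset_Zorn_nonempty[of \<A>] assms unfolding \<A>_def by blast
  have "ultrafilter M"
  proof (rule maximal_finite_intersection_property_imp_ultrafilter)
    show "finite_intersection_property M" using \<open>M \<in> \<A>\<close> unfolding \<A>_def by blast
    fix X assume "finite_intersection_property (insert X M)"
    then have "insert X M \<in> \<A>" using \<open>M \<in> \<A>\<close> unfolding \<A>_def by blast
    then show "X \<in> M" using max by blast
  qed
  then show ?thesis using \<open>M \<in> \<A>\<close> unfolding \<A>_def by blast
qed

lemma finite_intersection_property_if_directed:
  assumes "\<D> \<noteq> {}" "{} \<notin> \<D>" and directed: "\<And>X Y. X \<in> \<D> \<Longrightarrow> Y \<in> \<D> \<Longrightarrow> \<exists>Z\<in>\<D>. Z \<subseteq> X \<inter> Y"
  shows "finite_intersection_property \<D>"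
  unfolding finite_intersection_property_def
proof (intro allI impI)
  fix \<F> :: "'a set set" assume "finite \<F>" "\<F> \<subseteq> \<D>"
  then have "\<exists>Z\<in>\<D>. Z \<subseteq> \<Inter>\<F>"
  proof (induction \<F> rule: finite_induct)
    case empty
    then show ?case using \<open>\<D> \<noteq> {}\<close> by auto
  next
    case (insert X \<F>)
    then obtain Z where "Z \<in> \<D>" "Z \<subseteq> \<Inter>\<F>" by auto
    moreover obtain Z' where "Z' \<in> \<D>" "Z' \<subseteq> X \<inter> Z"
      using directed[of X Z] insert.prems \<open>Z \<in> \<D>\<close> by auto
    ultimately show ?case by auto
  qed
  then show "\<Inter>\<F> \<noteq> {}" using \<open>{} \<notin> \<D>\<close> by (metis subset_empty)
qed

lemma aboveS_antimono:
  assumes "trans r" "antisym r" "(a, b) \<in> r"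
  shows "aboveS r b \<subseteq> aboveS r a"
  using assms unfolding aboveS_def trans_def antisym_def by blast

lemma aboveS_upward_closed:
  assumes "trans r" "antisym r" "x \<in> aboveS r a" "(x, y) \<in> r"
  shows "y \<in> aboveS r a"
  using assms unfolding aboveS_def trans_def antisym_def by blast

lemma strict_below_iff_aboveS: "strict_below r a b \<longleftrightarrow> b \<in> aboveS r a"
  unfolding strict_below_def aboveS_def by auto

lemma tails_finite_intersection_property:
  assumes co: "card_order (r :: 'a rel)" and inf: "infinite (UNIV :: 'a set)" and unb: "unbounded_in r I"
  shows "finite_intersection_property (range (\<lambda>g. I \<inter> aboveS r g))"
proof (rule finite_intersection_property_if_directed)
  have C: "Card_order r" and F: "Field r = UNIV" using card_order_on_Card_order[OF co] by auto
  have "well_order r" using card_order_on_well_order_on[OF co] .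
  then have tr: "trans r" and an: "antisym r" and tot: "total_on UNIV r" and rf: "refl_on UNIV r"
    unfolding well_order_on_def linear_order_on_def partial_order_on_def preorder_on_def by auto
  show "{} \<notin> range (\<lambda>g. I \<inter> aboveS r g)"
  proof
    assume "{} \<in> range (\<lambda>g. I \<inter> aboveS r g)"
    then obtain g where empty: "I \<inter> aboveS r g = {}" by auto
    obtain x where x: "x \<in> aboveS r g"
      using infinite_Card_order_limit[OF C, of g] inf F unfolding aboveS_def by force
    obtain b where "b \<in> I" "(x, b) \<in> r" using unb unfolding unbounded_in_def by blast
    with aboveS_upward_closed[OF tr an x] have "b \<in> I \<inter> aboveS r g" by blast
    then show False using empty by simp
  qed
  have comparable: "(a, b) \<in> r \<or> (b, a) \<in> r" for a b
    using tot rf unfolding total_on_def refl_on_def by (cases "a = b") auto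
  fix X Y assume "X \<in> range (\<lambda>g. I \<inter> aboveS r g)" "Y \<in> range (\<lambda>g. I \<inter> aboveS r g)"
  then obtain a b where X: "X = I \<inter> aboveS r a" and Y: "Y = I \<inter> aboveS r b" by blast
  show "\<exists>Z\<in>range (\<lambda>g. I \<inter> aboveS r g). Z \<subseteq> X \<inter> Y"
  proof (cases "(a, b) \<in> r")
    case True
    then show ?thesis using aboveS_antimono[OF tr an True] unfolding X Y by blast
  next
    case False
    then have "(b, a) \<in> r" using comparable by blast
    then show ?thesis using aboveS_antimono[OF tr an] unfolding X Y by blast
  qed
qed simp

lemma lambda_system_unbounded: "lambda_system r I n RR \<Longrightarrow> unbounded_in r I"
  unfolding lambda_system_def by simp

lemma lambda_system_tree_like: "lambda_system r I n RR \<Longrightarrow> R \<in> RR \<Longrightarrow> tree_like R"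
  unfolding lambda_system_def by simp

lemma lambda_system_linked:
  assumes "lambda_system r I n RR" "\<alpha> \<in> I" "\<beta> \<in> I" "strict_below r \<alpha> \<beta>"
  shows "\<exists>b<n. \<exists>b'<n. \<exists>R\<in>RR. ((\<alpha>, b), (\<beta>, b')) \<in> R"
  using assms unfolding lambda_system_def by simp

definition successors_at :: "('a \<times> nat) rel \<Rightarrow> 'a \<times> nat \<Rightarrow> nat \<Rightarrow> 'a set" where
  "successors_at R x b' = {\<gamma>. (x, (\<gamma>, b')) \<in> R}"

lemma lambda_system_large_successors:
  assumes sys: "lambda_system r I n RR" and "finite RR"
    and U: "ultrafilter U" and tails: "\<And>g. I \<inter> aboveS r g \<in> U" and "\<alpha> \<in> I"
  shows "\<exists>(b, R, b') \<in> {..<n} \<times> RR \<times> {..<n}. successors_at R (\<alpha>, b) b' \<in> U"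
proof -
  let ?T = "{..<n} \<times> RR \<times> {..<n}"
  have "I \<inter> aboveS r \<alpha> \<subseteq> (\<Union>(b, R, b') \<in> ?T. successors_at R (\<alpha>, b) b')"
  proof
    fix \<gamma> assume "\<gamma> \<in> I \<inter> aboveS r \<alpha>"
    then obtain b R b' where "b < n" "b' < n" "R \<in> RR" "((\<alpha>, b), (\<gamma>, b')) \<in> R"
      using lambda_system_linked[OF sys \<open>\<alpha> \<in> I\<close>, of \<gamma>] by (auto simp: strict_below_iff_aboveS)
    then show "\<gamma> \<in> (\<Union>(b, R, b') \<in> ?T. successors_at R (\<alpha>, b) b')"
      unfolding successors_at_def by force
  qed
  then have "(\<Union>(b, R, b') \<in> ?T. successors_at R (\<alpha>, b) b') \<in> U"
    using ultrafilter_mono[OF U tails] by blast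
  moreover have "finite ?T" using \<open>finite RR\<close> by simp
  ultimately obtain t where "t \<in> ?T" "(case t of (b, R, b') \<Rightarrow> successors_at R (\<alpha>, b) b') \<in> U"
    using ultrafilter_finite_UN[OF U] by blast
  then show ?thesis by (cases t) auto
qed

lemma is_branch_if_common_successors:
  assumes "tree_like R" "A \<subseteq> I" "b < n"
    and common: "\<And>\<alpha> \<beta>. \<alpha> \<in> A \<Longrightarrow> \<beta> \<in> A \<Longrightarrow> \<exists>z. ((\<alpha>, b), z) \<in> R \<and> ((\<beta>, b), z) \<in> R"
  shows "is_branch I n R (A \<times> {b})"
  unfolding is_branch_def sys_points_def
proof (intro conjI ballI)
  show "A \<times> {b} \<subseteq> I \<times> {..<n}" using assms(2,3) by auto
  fix x y assume "x \<in> A \<times> {b}" "y \<in> A \<times> {b}"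
  then obtain \<alpha> \<beta> where "x = (\<alpha>, b)" "y = (\<beta>, b)" "\<alpha> \<in> A" "\<beta> \<in> A" by blast
  then show "x = y \<or> (x, y) \<in> R \<or> (y, x) \<in> R"
    using common \<open>tree_like R\<close> unfolding tree_like_def by blast
qed

lemma lambda_system_cofinal_branch_if_ultrafilter:
  assumes sys: "lambda_system r I n RR" and "finite RR"
    and U: "ultrafilter U" and tails: "\<And>g. I \<inter> aboveS r g \<in> U"
  shows "\<exists>R\<in>RR. \<exists>B. cofinal_branch r I n R B"
proof -
  let ?T = "{..<n} \<times> RR \<times> {..<n}"
  have "\<forall>\<alpha>\<in>I. \<exists>t. t \<in> ?T \<and> (case t of (b, R, b') \<Rightarrow> successors_at R (\<alpha>, b) b' \<in> U)"
    using lambda_system_large_successors[OF sys \<open>finite RR\<close> U tails] by blast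
  from bchoice[OF this] obtain link where
    "\<forall>\<alpha>\<in>I. link \<alpha> \<in> ?T \<and> (case link \<alpha> of (b, R, b') \<Rightarrow> successors_at R (\<alpha>, b) b' \<in> U)" ..
  note link = this[rule_format]
  have "I \<in> U" using ultrafilter_mono[OF U tails] by blast
  have "finite ?T" using \<open>finite RR\<close> by simp
  have "link ` I \<subseteq> ?T" using link by blast
  obtain t where "t \<in> ?T" and "{\<alpha>\<in>I. link \<alpha> = t} \<in> U"
    using ultrafilter_pigeonhole[OF U \<open>I \<in> U\<close> \<open>finite ?T\<close> \<open>link ` I \<subseteq> ?T\<close>] by blast
  moreover obtain b R b' where "t = (b, R, b')" by (cases t)
  ultimately have "R \<in> RR" "b < n" and A: "{\<alpha>\<in>I. link \<alpha> = (b, R, b')} \<in> U" by auto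
  define A where "A = {\<alpha>\<in>I. link \<alpha> = (b, R, b')}"
  have succ: "successors_at R (\<alpha>, b) b' \<in> U" if "\<alpha> \<in> A" for \<alpha>
    using link[of \<alpha>] that unfolding A_def by auto
  have "is_branch I n R (A \<times> {b})"
  proof (rule is_branch_if_common_successors)
    show "tree_like R" using lambda_system_tree_like[OF sys \<open>R \<in> RR\<close>] .
    fix \<alpha> \<beta> assume "\<alpha> \<in> A" "\<beta> \<in> A"
    then obtain \<gamma> where "\<gamma> \<in> successors_at R (\<alpha>, b) b'" "\<gamma> \<in> successors_at R (\<beta>, b) b'"
      using succ ultrafilter_Int[OF U] ultrafilter_nonempty[OF U] by (metis IntE)
    then show "\<exists>z. ((\<alpha>, b), z) \<in> R \<and> ((\<beta>, b), z) \<in> R" unfolding successors_at_def by blast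
  qed (use \<open>b < n\<close> in \<open>auto simp: A_def\<close>)
  moreover have "\<exists>\<alpha>\<in>I. (g, \<alpha>) \<in> r \<and> (\<exists>c. (\<alpha>, c) \<in> A \<times> {b})" for g
    using ultrafilter_nonempty[OF U ultrafilter_Int[OF U A tails[of g]]]
    unfolding A_def aboveS_def by auto
  ultimately show ?thesis using \<open>R \<in> RR\<close> unfolding cofinal_branch_def by blast
qed

theorem mainTheorem7:
  fixes r :: "'a rel" and I :: "'a set" and n :: nat and RR :: "('a \<times> nat) rel set"
  assumes "card_order r" and "infinite (UNIV :: 'a set)" and "regularCard r"
    and "lambda_system r I n RR"
    and "finite RR"
  shows "\<exists>R\<in>RR. \<exists>B. cofinal_branch r I n R B"
proof -
  have "finite_intersection_property (range (\<lambda>g. I \<inter> aboveS r g))"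
    using tails_finite_intersection_property[OF assms(1,2) lambda_system_unbounded[OF assms(4)]] .
  then obtain U where U: "ultrafilter U" and tails: "range (\<lambda>g. I \<inter> aboveS r g) \<subseteq> U"
    using ultrafilter_extending_finite_intersection_property by blast
  show ?thesis
    by (rule lambda_system_cofinal_branch_if_ultrafilter[OF assms(4,5) U]) (use tails in blast)
qed

end
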